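(* Let $k\ge1$ be an integer and $a,b,c,d\ge0$. Let $S_1=\inf\{S(u,v):(u,v)\in H^1(\mathbb{R})\times H^1(\mathbb{R}),\ \widetilde P(u,v)=1\}$ and $\lambda_1=(S_1)^{\frac{k+1}{k}}$. Then $$\lambda_1=\frac{2k+2}{k}\,\omega_{\mathcal{N}},$$ where $\omega_{\mathcal{N}}=\inf_{(u,v)\in\mathcal{N}}I(u,v)$.
   Context: $H(u,v)=\frac{a}{2k+2}(u^{2k+2}+v^{2k+2})+\frac{b}{k+1}(uv)^{k+1}+\frac{c}{k}u^{k+2}v^k+\frac{d}{k}u^kv^{k+2}$; $S(u,v)=\int(u'^2+v'^2+u^2+v^2)dx$; $\widetilde P(u,v)=(2k+2)\int H(u,v)dx$; $I(u,v)=\frac12S(u,v)-\int H(u,v)dx$; $\mathcal{N}=\{(u,v)\in H^1\times H^1\setminus\{(0,0)\}:I'(u,v)(u,v)=0\}$. *)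

theory Defs
  imports "HOL-Analysis.Analysis"
begin

definition test_fun :: "(real \<Rightarrow> real) \<Rightarrow> bool" where
  "test_fun \<phi> \<longleftrightarrow> (\<forall>n x. (deriv ^^ n) \<phi> differentiable (at x))
                    \<and> compact (closure {x. \<phi> x \<noteq> 0})"

definition L2 :: "(real \<Rightarrow> real) \<Rightarrow> bool" where
  "L2 u \<longleftrightarrow> u \<in> borel_measurable lborel \<and> integrable lborel (\<lambda>x. (u x)^2)"

definition is_weak_deriv :: "(real \<Rightarrow> real) \<Rightarrow> (real \<Rightarrow> real) \<Rightarrow> bool" where
  "is_weak_deriv u g \<longleftrightarrow> (\<forall>\<phi>. test_fun \<phi> \<longrightarrow>
      integrable lborel (\<lambda>x. u x * deriv \<phi> x) \<and> integrable lborel (\<lambda>x. g x * \<phi> x) \<and>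
      (\<integral>x. u x * deriv \<phi> x \<partial>lborel) = - (\<integral>x. g x * \<phi> x \<partial>lborel))"

definition H1 :: "(real \<Rightarrow> real) set" where
  "H1 = {u. L2 u \<and> (\<exists>g. L2 g \<and> is_weak_deriv u g)}"

(* the (a.e. unique) weak derivative u' in L^2 *)
definition wderiv :: "(real \<Rightarrow> real) \<Rightarrow> (real \<Rightarrow> real)" where
  "wderiv u = (SOME g. L2 g \<and> is_weak_deriv u g)"

definition Hfun :: "nat \<Rightarrow> real \<Rightarrow> real \<Rightarrow> real \<Rightarrow> real \<Rightarrow> real \<Rightarrow> real \<Rightarrow> real" where
  "Hfun k a b c d u v =
     a / (2 * real k + 2) * (u^(2*k+2) + v^(2*k+2)) + b / (real k + 1) * (u * v)^(k+1)
     + c / real k * u^(k+2) * v^k + d / real k * u^k * v^(k+2)"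

definition Sfun :: "(real \<Rightarrow> real) \<Rightarrow> (real \<Rightarrow> real) \<Rightarrow> real" where
  "Sfun u v = (\<integral>x. (wderiv u x)^2 + (wderiv v x)^2 + (u x)^2 + (v x)^2 \<partial>lborel)"

definition Ptilde :: "nat \<Rightarrow> real \<Rightarrow> real \<Rightarrow> real \<Rightarrow> real \<Rightarrow> (real \<Rightarrow> real) \<Rightarrow> (real \<Rightarrow> real) \<Rightarrow> real" where
  "Ptilde k a b c d u v = (2 * real k + 2) * (\<integral>x. Hfun k a b c d (u x) (v x) \<partial>lborel)"

definition Ifun :: "nat \<Rightarrow> real \<Rightarrow> real \<Rightarrow> real \<Rightarrow> real \<Rightarrow> (real \<Rightarrow> real) \<Rightarrow> (real \<Rightarrow> real) \<Rightarrow> real" where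
  "Ifun k a b c d u v = Sfun u v / 2 - (\<integral>x. Hfun k a b c d (u x) (v x) \<partial>lborel)"

(* Nehari manifold: (u,v) \<in> H^1 \<times> H^1, (u,v) \<noteq> (0,0) in H^1 (i.e. not a.e. zero),
   and I'(u,v)(u,v) = 0, the derivative of I at (u,v) in direction (u,v) *)
definition Nehari :: "nat \<Rightarrow> real \<Rightarrow> real \<Rightarrow> real \<Rightarrow> real \<Rightarrow> ((real \<Rightarrow> real) \<times> (real \<Rightarrow> real)) set" where
  "Nehari k a b c d = {(u, v). u \<in> H1 \<and> v \<in> H1 \<and>
      \<not> (AE x in lborel. u x = 0 \<and> v x = 0) \<and>
      ((\<lambda>t. Ifun k a b c d (\<lambda>x. u x + t * u x) (\<lambda>x. v x + t * v x)) has_real_derivative 0) (at 0)}"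

definition ereal_powr :: "ereal \<Rightarrow> real \<Rightarrow> ereal" where
  "ereal_powr x p = (if x = \<infinity> then \<infinity> else ereal (real_of_ereal x powr p))"

definition S1 :: "nat \<Rightarrow> real \<Rightarrow> real \<Rightarrow> real \<Rightarrow> real \<Rightarrow> ereal" where
  "S1 k a b c d = (INF p \<in> {(u, v). u \<in> H1 \<and> v \<in> H1 \<and> Ptilde k a b c d u v = 1}.
                     ereal (Sfun (fst p) (snd p)))"

definition lambda1 :: "nat \<Rightarrow> real \<Rightarrow> real \<Rightarrow> real \<Rightarrow> real \<Rightarrow> ereal" where
  "lambda1 k a b c d = ereal_powr (S1 k a b c d) ((real k + 1) / real k)"

definition omegaN :: "nat \<Rightarrow> real \<Rightarrow> real \<Rightarrow> real \<Rightarrow> real \<Rightarrow> ereal" where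
  "omegaN k a b c d = (INF p \<in> Nehari k a b c d. ereal (Ifun k a b c d (fst p) (snd p)))"

end

theory Submission
  imports Defs "HOL-Computational_Algebra.Polynomial"
begin

(* Under (u, v) |-> (t u, t v) the functional S is 2-homogeneous and Ptilde is
   (2k+2)-homogeneous, and the Nehari manifold is the set of nonzero pairs with S = Ptilde,
   on which I = k S / (2k+2).  Rescaling a pair with Ptilde = 1 by t = S^(1/(2k)) puts it on
   the Nehari manifold and turns S into S^((k+1)/k); conversely every Nehari pair is a
   rescaled constraint pair.  Hence S^((k+1)/k) on the constraint set and (2k+2)/k I on the
   Nehari manifold take exactly the same values, and x |-> x^((k+1)/k) commutes with infima.
   The analytic input is that S really scales quadratically, i.e. that weak derivatives are
   unique a.e.: this is the fundamental lemma of the calculus of variations, proved with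
   smooth cutoffs built from exp(-1/x). *)

section \<open>Iterated differentiability\<close>

fun n_times_differentiable :: "nat \<Rightarrow> (real \<Rightarrow> real) \<Rightarrow> bool" where
  "n_times_differentiable 0 h = True"
| "n_times_differentiable (Suc n) h =
     (\<exists>h'. (\<forall>x. (h has_real_derivative h' x) (at x)) \<and> n_times_differentiable n h')"

lemma n_times_differentiable_SucD:
  "n_times_differentiable (Suc n) h \<Longrightarrow> n_times_differentiable n h"
proof (induction n arbitrary: h)
  case (Suc n)
  then obtain h' where "\<forall>x. (h has_real_derivative h' x) (at x)" "n_times_differentiable (Suc n) h'"
    by auto
  then show ?case using Suc.IH by auto
qed simp

lemma n_times_differentiable_const: "n_times_differentiable n (\<lambda>x. c)"
  by (induction n arbitrary: c) (auto intro!: exI[of _ "\<lambda>x. 0"] derivative_eq_intros)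

lemma n_times_differentiable_add:
  "n_times_differentiable n f \<Longrightarrow> n_times_differentiable n g \<Longrightarrow>
   n_times_differentiable n (\<lambda>x. f x + g x)"
proof (induction n arbitrary: f g)
  case (Suc n)
  then obtain f' g' where "\<forall>x. (f has_real_derivative f' x) (at x)" "n_times_differentiable n f'"
    and "\<forall>x. (g has_real_derivative g' x) (at x)" "n_times_differentiable n g'" by auto
  with Suc.IH[of f' g'] show ?case
    by (auto intro!: exI[of _ "\<lambda>x. f' x + g' x"] derivative_eq_intros)
qed simp

lemma n_times_differentiable_mult:
  "n_times_differentiable n f \<Longrightarrow> n_times_differentiable n g \<Longrightarrow>
   n_times_differentiable n (\<lambda>x. f x * g x)"
proof (induction n arbitrary: f g)
  case (Suc n)
  then obtain f' g' where f': "\<forall>x. (f has_real_derivative f' x) (at x)" "n_times_differentiable n f'"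
    and g': "\<forall>x. (g has_real_derivative g' x) (at x)" "n_times_differentiable n g'" by auto
  have "n_times_differentiable n f" "n_times_differentiable n g"
    using Suc.prems n_times_differentiable_SucD by auto
  then have "n_times_differentiable n (\<lambda>x. f' x * g x + f x * g' x)"
    using Suc.IH f' g' n_times_differentiable_add by auto
  with f' g' show ?case
    by (auto intro!: exI[of _ "\<lambda>x. f' x * g x + f x * g' x"] derivative_eq_intros)
qed simp

lemma n_times_differentiable_compose_affine:
  "n_times_differentiable n h \<Longrightarrow> n_times_differentiable n (\<lambda>x. h (c * x + e))"
proof (induction n arbitrary: h)
  case (Suc n)
  then obtain h' where h': "\<forall>x. (h has_real_derivative h' x) (at x)" "n_times_differentiable n h'"
    by auto
  have "n_times_differentiable n (\<lambda>x. c * h' (c * x + e))"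
    using n_times_differentiable_mult[OF n_times_differentiable_const Suc.IH[OF h'(2)]] by simp
  moreover have "((\<lambda>x. h (c * x + e)) has_real_derivative c * h' (c * x + e)) (at x)" for x
  proof -
    have "((\<lambda>x. c * x + e) has_real_derivative c) (at x)"
      by (auto intro!: derivative_eq_intros)
    from DERIV_chain2[OF h'(1)[rule_format] this] show ?thesis by (simp add: mult.commute)
  qed
  ultimately show ?case by (auto intro!: exI[of _ "\<lambda>x. c * h' (c * x + e)"])
qed simp

lemma n_times_differentiable_inverse:
  "n_times_differentiable n h \<Longrightarrow> (\<And>x. h x \<noteq> 0) \<Longrightarrow> n_times_differentiable n (\<lambda>x. 1 / h x)"
proof (induction n arbitrary: h)
  case (Suc n)
  then obtain h' where h': "\<forall>x. (h has_real_derivative h' x) (at x)" "n_times_differentiable n h'"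
    by auto
  have inv: "n_times_differentiable n (\<lambda>x. 1 / h x)"
    using Suc n_times_differentiable_SucD by blast
  have "n_times_differentiable n (\<lambda>x. (- 1 * h' x) * (1 / h x * (1 / h x)))"
    by (intro n_times_differentiable_mult n_times_differentiable_const inv h'(2))
  moreover have "((\<lambda>x. 1 / h x) has_real_derivative (- 1 * h' x) * (1 / h x * (1 / h x))) (at x)" for x
    using h'(1) Suc.prems(2)[of x]
    by (auto intro!: derivative_eq_intros simp: divide_simps power2_eq_square)
  ultimately show ?case by (auto intro!: exI[of _ "\<lambda>x. (- 1 * h' x) * (1 / h x * (1 / h x))"])
qed simp

lemma n_times_differentiable_imp_deriv_differentiable:
  "n_times_differentiable (Suc n) h \<Longrightarrow> (deriv ^^ n) h differentiable (at x)"
proof (induction n arbitrary: h)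
  case 0
  then show ?case by (auto simp: real_differentiable_def)
next
  case (Suc n)
  then obtain h' where h': "\<forall>x. (h has_real_derivative h' x) (at x)" "n_times_differentiable (Suc n) h'"
    by auto
  then have "deriv h = h'" using DERIV_imp_deriv by blast
  then have "(deriv ^^ Suc n) h = (deriv ^^ n) h'"
    by (simp add: funpow_Suc_right del: funpow.simps)
  then show ?case using Suc.IH[OF h'(2)] by simp
qed

section \<open>Smooth cutoff functions\<close>

definition flat_exp :: "real poly \<Rightarrow> real \<Rightarrow> real" where
  "flat_exp P x = (if x > 0 then poly P (1 / x) * exp (- 1 / x) else 0)"

text \<open>The derivative of \<open>P(1/x) e^(-1/x)\<close> is \<open>x\<^sup>-\<^sup>2 (P - P')(1/x) e^(-1/x)\<close>, and the factor
  \<open>[:0, 0, 1:]\<close> evaluated at \<open>1/x\<close> is \<open>x\<^sup>-\<^sup>2\<close>; so the functions \<open>flat_exp P\<close> are closed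
  under differentiation.\<close>
definition flat_exp_deriv_poly :: "real poly \<Rightarrow> real poly" where
  "flat_exp_deriv_poly P = [:0, 0, 1:] * (P - pderiv P)"

lemma tendsto_poly_times_exp_neg_at_top:
  fixes P :: "real poly"
  shows "((\<lambda>y. poly P y * exp (- y)) \<longlongrightarrow> 0) at_top"
proof -
  have "poly P y * exp (- y) = (\<Sum>i\<le>degree P. coeff P i * (y ^ i / exp y))" for y
    by (simp add: poly_altdef exp_minus divide_inverse sum_distrib_right mult.assoc)
  moreover have "((\<lambda>y. \<Sum>i\<le>degree P. coeff P i * (y ^ i / exp y)) \<longlongrightarrow> 0) at_top"
    by (intro tendsto_null_sum tendsto_mult_right_zero tendsto_power_div_exp_0)
  ultimately show ?thesis by simp
qed

lemma tendsto_poly_inverse_times_exp_at_right_0: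
  fixes P :: "real poly"
  shows "((\<lambda>x. poly P (1 / x) * exp (- 1 / x)) \<longlongrightarrow> 0) (at_right 0)"
  unfolding filterlim_at_right_to_top
  using tendsto_poly_times_exp_neg_at_top[of P] by (simp add: divide_inverse)

lemma has_real_derivative_flat_exp:
  "(flat_exp P has_real_derivative flat_exp (flat_exp_deriv_poly P) x) (at x)"
proof (cases x "0 :: real" rule: linorder_cases)
  case greater
  have "((\<lambda>y. 1 / y) has_real_derivative - 1 / x\<^sup>2) (at x)"
    using greater by (auto intro!: derivative_eq_intros simp: power2_eq_square)
  from DERIV_chain2[where f = "poly P", OF poly_DERIV this]
  have "((\<lambda>y. poly P (1 / y) * exp (- 1 / y)) has_real_derivative
          flat_exp (flat_exp_deriv_poly P) x) (at x)"
    using greater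
    by (auto intro!: derivative_eq_intros
             simp: flat_exp_def flat_exp_deriv_poly_def poly_mult algebra_simps power2_eq_square divide_simps)
  then show ?thesis
    by (rule has_field_derivative_transform_within_open[of _ _ _ "{0<..}"])
       (use greater in \<open>auto simp: flat_exp_def\<close>)
next
  case less
  have "((\<lambda>y. 0) has_real_derivative flat_exp (flat_exp_deriv_poly P) x) (at x)"
    using less by (simp add: flat_exp_def)
  then show ?thesis
    by (rule has_field_derivative_transform_within_open[of _ _ _ "{..<0}"])
       (use less in \<open>auto simp: flat_exp_def\<close>)
next
  case equal
  have "((\<lambda>y. (flat_exp P y - flat_exp P 0) / (y - 0)) \<longlongrightarrow> 0) (at 0)"
  proof (rule filterlim_split_at)
    have "\<forall>\<^sub>F y in at_left 0. (flat_exp P y - flat_exp P 0) / (y - 0) = 0"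
      by (rule eventually_mono[OF eventually_at_left_real[of "-1"]]) (auto simp: flat_exp_def)
    then show "((\<lambda>y. (flat_exp P y - flat_exp P 0) / (y - 0)) \<longlongrightarrow> 0) (at_left 0)"
      by (rule tendsto_eventually)
  next
    have "\<forall>\<^sub>F y in at_right 0. poly (pCons 0 P) (1 / y) * exp (- 1 / y) =
                                 (flat_exp P y - flat_exp P 0) / (y - 0)"
      by (rule eventually_mono[OF eventually_at_right_real[of 0 1]]) (auto simp: flat_exp_def)
    with tendsto_poly_inverse_times_exp_at_right_0
    show "((\<lambda>y. (flat_exp P y - flat_exp P 0) / (y - 0)) \<longlongrightarrow> 0) (at_right 0)"
      by (rule Lim_transform_eventually)
  qed
  then show ?thesis
    using equal by (simp add: has_field_derivative_iff flat_exp_def)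
qed

lemma n_times_differentiable_flat_exp: "n_times_differentiable n (flat_exp P)"
  by (induction n arbitrary: P) (use has_real_derivative_flat_exp in auto)

definition smooth_step :: "real \<Rightarrow> real" where
  "smooth_step x = flat_exp 1 x / (flat_exp 1 x + flat_exp 1 (1 - x))"

lemma flat_exp_1_pos: "0 < x \<Longrightarrow> 0 < flat_exp 1 x"
  and flat_exp_1_eq_0: "x \<le> 0 \<Longrightarrow> flat_exp 1 x = 0"
  and flat_exp_1_nonneg: "0 \<le> flat_exp 1 x"
  by (auto simp: flat_exp_def)

lemma smooth_step_denominator_pos: "0 < flat_exp 1 x + flat_exp 1 (1 - x)"
  using flat_exp_1_pos[of x] flat_exp_1_pos[of "1 - x"] flat_exp_1_nonneg[of x]
    flat_exp_1_nonneg[of "1 - x"]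
  by (cases "0 < x") auto

lemma n_times_differentiable_smooth_step: "n_times_differentiable n smooth_step"
proof -
  have "n_times_differentiable n (\<lambda>x. flat_exp 1 x * (1 / (flat_exp 1 x + flat_exp 1 (- 1 * x + 1))))"
    using smooth_step_denominator_pos
    by (intro n_times_differentiable_mult n_times_differentiable_inverse
        n_times_differentiable_add n_times_differentiable_compose_affine
        n_times_differentiable_flat_exp) (simp add: less_imp_neq[symmetric])
  then show ?thesis by (simp add: smooth_step_def[abs_def])
qed

lemma smooth_step_eq_0: "x \<le> 0 \<Longrightarrow> smooth_step x = 0"
  by (simp add: smooth_step_def flat_exp_1_eq_0)

lemma smooth_step_eq_1: "1 \<le> x \<Longrightarrow> smooth_step x = 1"
  using smooth_step_denominator_pos[of x] by (simp add: smooth_step_def flat_exp_1_eq_0)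

lemma smooth_step_bounds: "0 \<le> smooth_step x" "smooth_step x \<le> 1"
  using smooth_step_denominator_pos[of x] flat_exp_1_nonneg[of x] flat_exp_1_nonneg[of "1 - x"]
  by (auto simp: smooth_step_def divide_simps)

definition smooth_cutoff :: "real \<Rightarrow> real \<Rightarrow> real \<Rightarrow> real \<Rightarrow> real" where
  "smooth_cutoff a b n x = smooth_step (n * x + (- n * a)) * smooth_step ((- n) * x + n * b)"

lemma smooth_cutoff_bounds: "0 \<le> smooth_cutoff a b n x" "smooth_cutoff a b n x \<le> 1"
  using smooth_step_bounds by (auto simp: smooth_cutoff_def intro: mult_le_one)

lemma smooth_cutoff_eq_0:
  assumes "0 < n" "x \<notin> {a<..<b}"
  shows "smooth_cutoff a b n x = 0"
proof -
  from assms consider "n * x \<le> n * a" | "n * b \<le> n * x"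
    by (metis greaterThanLessThan_iff linorder_not_le mult_le_cancel_left_pos)
  then show ?thesis
    by cases (auto simp: smooth_cutoff_def smooth_step_eq_0)
qed

lemma test_fun_smooth_cutoff:
  assumes "0 < n"
  shows "test_fun (smooth_cutoff a b n)"
proof -
  have "n_times_differentiable m (smooth_cutoff a b n)" for m
    unfolding smooth_cutoff_def[abs_def]
    by (intro n_times_differentiable_mult n_times_differentiable_compose_affine
        n_times_differentiable_smooth_step)
  then have "(deriv ^^ m) (smooth_cutoff a b n) differentiable (at x)" for m x
    using n_times_differentiable_imp_deriv_differentiable by blast
  moreover have "{x. smooth_cutoff a b n x \<noteq> 0} \<subseteq> {a<..<b}"
    using smooth_cutoff_eq_0[OF assms] by blast
  then have "bounded {x. smooth_cutoff a b n x \<noteq> 0}"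
    by (rule bounded_subset[rotated]) simp
  ultimately show ?thesis unfolding test_fun_def by simp
qed

lemma smooth_cutoff_tendsto_indicator:
  "(\<lambda>i. smooth_cutoff a b (real (Suc i)) x) \<longlonglongrightarrow> indicator {a<..<b} x"
proof (cases "x \<in> {a<..<b}")
  case True
  obtain N1 :: nat where N1: "1 / (x - a) < N1" using reals_Archimedean2 by blast
  obtain N2 :: nat where N2: "1 / (b - x) < N2" using reals_Archimedean2 by blast
  have "smooth_cutoff a b (real (Suc i)) x = 1" if "N1 + N2 \<le> i" for i
  proof -
    have "1 / (x - a) < real (Suc i)" "1 / (b - x) < real (Suc i)"
      using N1 N2 that by linarith+
    then have "1 \<le> real (Suc i) * x + (- real (Suc i) * a)"
      "1 \<le> (- real (Suc i)) * x + real (Suc i) * b"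
      using True by (simp_all add: divide_simps algebra_simps)
    then show ?thesis by (simp add: smooth_cutoff_def smooth_step_eq_1)
  qed
  then have "(\<lambda>i. smooth_cutoff a b (real (Suc i)) x) \<longlonglongrightarrow> 1"
    by (intro tendsto_eventually) (auto simp: eventually_sequentially)
  then show ?thesis using True by simp
next
  case False
  then show ?thesis using smooth_cutoff_eq_0[of "real (Suc _)" x a b] by simp
qed

section \<open>Fundamental lemma of the calculus of variations\<close>

lemma L2_integrable_indicator:
  assumes "L2 g" "A \<in> sets lborel" "emeasure lborel A < \<infinity>"
  shows "integrable lborel (\<lambda>x. g x * indicator A x)"
proof (rule Bochner_Integration.integrable_bound)
  have [measurable]: "g \<in> borel_measurable lborel" "A \<in> sets borel"
    using assms(1,2) by (simp_all add: L2_def)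
  have "integrable lborel (\<lambda>x. (g x)\<^sup>2)"
    using assms(1) by (simp add: L2_def)
  then show "integrable lborel (\<lambda>x. (g x)\<^sup>2 + indicator A x)"
    using assms(2,3) by (intro Bochner_Integration.integrable_add integrable_real_indicator)
  show "(\<lambda>x. g x * indicator A x) \<in> borel_measurable lborel" by measurable
  have "\<bar>g x\<bar> \<le> (g x)\<^sup>2 + 1" for x
  proof (cases "\<bar>g x\<bar> \<le> 1")
    case False
    then have "\<bar>g x\<bar> * 1 \<le> \<bar>g x\<bar> * \<bar>g x\<bar>" by (intro mult_left_mono) auto
    then show ?thesis by (simp add: power2_eq_square)
  qed (simp add: add_increasing)
  then show "AE x in lborel. norm (g x * indicator A x) \<le> norm ((g x)\<^sup>2 + indicator A x)"
    by (intro AE_I2) (auto split: split_indicator)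
qed

lemma emeasure_lborel_Ioo_finite: "emeasure lborel {a<..<b::real} < \<infinity>"
  by (cases "a \<le> b") auto

lemma interval_integral_eq_0_if_orthogonal_test_funs:
  assumes L: "L2 g"
    and orth: "\<And>\<phi>. test_fun \<phi> \<Longrightarrow> integrable lborel (\<lambda>x. g x * \<phi> x) \<and> (\<integral>x. g x * \<phi> x \<partial>lborel) = 0"
  shows "(\<integral>x. g x * indicator {a<..<b} x \<partial>lborel) = 0"
proof -
  have [measurable]: "g \<in> borel_measurable lborel" using L by (simp add: L2_def)
  let ?g = "\<lambda>i x. g x * smooth_cutoff a b (real (Suc i)) x"
  have test: "test_fun (smooth_cutoff a b (real (Suc i)))" for i
    by (rule test_fun_smooth_cutoff) simp
  have "(\<lambda>i. integral\<^sup>L lborel (?g i)) \<longlonglongrightarrow> (\<integral>x. g x * indicator {a<..<b} x \<partial>lborel)"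
  proof (rule integral_dominated_convergence[where w = "\<lambda>x. \<bar>g x * indicator {a<..<b} x\<bar>"])
    show "?g i \<in> borel_measurable lborel" for i
      using orth[OF test[of i]] by (intro borel_measurable_integrable) simp
    show "integrable lborel (\<lambda>x. \<bar>g x * indicator {a<..<b} x\<bar>)"
      by (intro integrable_abs L2_integrable_indicator L emeasure_lborel_Ioo_finite) simp
    show "AE x in lborel. (\<lambda>i. ?g i x) \<longlonglongrightarrow> g x * indicator {a<..<b} x"
      by (intro AE_I2 tendsto_mult_left smooth_cutoff_tendsto_indicator)
    show "AE x in lborel. norm (?g i x) \<le> \<bar>g x * indicator {a<..<b} x\<bar>" for i
    proof (rule AE_I2)
      fix x
      show "norm (?g i x) \<le> \<bar>g x * indicator {a<..<b} x\<bar>"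
      proof (cases "x \<in> {a<..<b}")
        case True
        then show ?thesis
          using smooth_cutoff_bounds[of a b "real (Suc i)" x] by (simp add: abs_mult mult_left_le)
      next
        case False
        then show ?thesis using smooth_cutoff_eq_0[of "real (Suc i)" x a b] by simp
      qed
    qed
  qed measurable
  moreover have "integral\<^sup>L lborel (?g i) = 0" for i
    using orth[OF test[of i]] by simp
  ultimately have "(\<lambda>i. 0) \<longlonglongrightarrow> (\<integral>x. g x * indicator {a<..<b} x \<partial>lborel)"
    by simp
  then show ?thesis
    by (rule LIMSEQ_unique[OF tendsto_const, symmetric])
qed

text \<open>The positive and negative parts of \<open>h\<close> are densities of measures that agree on all
  half-lines, hence coincide.\<close>
lemma integrable_AE_eq_0_if_halfline_integrals_eq_0:
  fixes h :: "real \<Rightarrow> real"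
  assumes h: "integrable lborel h"
    and zero: "\<And>t. (\<integral>x. h x * indicator {t<..} x \<partial>lborel) = 0"
  shows "AE x in lborel. h x = 0"
proof -
  have [measurable]: "h \<in> borel_measurable lborel" using h by (rule borel_measurable_integrable)
  let ?hp = "\<lambda>x. max 0 (h x)" and ?hn = "\<lambda>x. max 0 (- h x)"
  have int: "integrable lborel ?hp" "integrable lborel ?hn"
    using h by auto
  have int_t: "integrable lborel (\<lambda>x. ?hp x * indicator {t<..} x)"
    "integrable lborel (\<lambda>x. ?hn x * indicator {t<..} x)" for t
    using int by (auto intro!: integrable_real_mult_indicator)
  have nn: "(\<integral>\<^sup>+x. ennreal (f x) * indicator {t<..} x \<partial>lborel) = ennreal (\<integral>x. f x * indicator {t<..} x \<partial>lborel)"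
    if "integrable lborel (\<lambda>x. f x * indicator {t<..} x)" "\<And>x. 0 \<le> f x" for f :: "real \<Rightarrow> real" and t
    using nn_integral_eq_integral[OF that(1)] that(2)
    by (auto simp: ennreal_mult' ennreal_indicator intro!: nn_integral_cong split: split_indicator)
  have eq_t: "(\<integral>x. ?hp x * indicator {t<..} x \<partial>lborel) = (\<integral>x. ?hn x * indicator {t<..} x \<partial>lborel)" for t
  proof -
    have "(\<integral>x. ?hp x * indicator {t<..} x \<partial>lborel) - (\<integral>x. ?hn x * indicator {t<..} x \<partial>lborel)
        = (\<integral>x. ?hp x * indicator {t<..} x - ?hn x * indicator {t<..} x \<partial>lborel)"
      using int_t by (simp add: Bochner_Integration.integral_diff)
    also have "\<dots> = (\<integral>x. h x * indicator {t<..} x \<partial>lborel)"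
      by (intro Bochner_Integration.integral_cong) (auto split: split_indicator)
    finally show ?thesis using zero by simp
  qed
  have "density lborel (\<lambda>x. ennreal (?hp x)) = density lborel (\<lambda>x. ennreal (?hn x))"
  proof (rule measure_eqI_lessThan)
    show "emeasure (density lborel (\<lambda>x. ennreal (?hp x))) {t<..} < \<infinity>" for t
      using nn[OF int_t(1)] by (simp add: emeasure_density)
    show "emeasure (density lborel (\<lambda>x. ennreal (?hp x))) {t<..} =
          emeasure (density lborel (\<lambda>x. ennreal (?hn x))) {t<..}" for t
      using nn[OF int_t(1)] nn[OF int_t(2)] eq_t[of t] by (simp add: emeasure_density)
  qed auto
  moreover have "integral\<^sup>N lborel (\<lambda>x. ennreal (?hp x)) \<noteq> \<infinity>"
    using nn_integral_eq_integral[OF int(1)] by simp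
  ultimately have "AE x in lborel. ennreal (?hp x) = ennreal (?hn x)"
    by (subst (asm) finite_density_unique) auto
  then show ?thesis
  proof (rule eventually_mono)
    fix x
    assume "ennreal (?hp x) = ennreal (?hn x)"
    then have "?hp x = ?hn x" by (simp add: ennreal_inj)
    then show "h x = 0" by (auto simp: max_def split: if_splits)
  qed
qed

lemma AE_eq_0_if_interval_integrals_eq_0:
  fixes g :: "real \<Rightarrow> real"
  assumes int: "\<And>a b. integrable lborel (\<lambda>x. g x * indicator {a<..<b} x)"
    and zero: "\<And>a b. (\<integral>x. g x * indicator {a<..<b} x \<partial>lborel) = 0"
  shows "AE x in lborel. g x = 0"
proof -
  have "AE x in lborel. g x * indicator {- real N<..<real N} x = 0" for N :: nat
  proof (rule integrable_AE_eq_0_if_halfline_integrals_eq_0[OF int])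
    fix t
    have "(\<lambda>x. g x * indicator {- real N<..<real N} x * indicator {t<..} x) =
          (\<lambda>x. g x * indicator {max t (- real N)<..<real N} x)"
      by (auto split: split_indicator)
    then show "(\<integral>x. g x * indicator {- real N<..<real N} x * indicator {t<..} x \<partial>lborel) = 0"
      by (simp only: zero)
  qed
  then have "AE x in lborel. \<forall>N::nat. g x * indicator {- real N<..<real N} x = 0"
    by (subst AE_all_countable) auto
  then show ?thesis
  proof (rule eventually_mono)
    fix x
    assume "\<forall>N::nat. g x * indicator {- real N<..<real N} x = 0"
    moreover obtain N :: nat where "\<bar>x\<bar> < N" using reals_Archimedean2 by blast
    ultimately show "g x = 0" by (auto simp: abs_less_iff split: split_indicator_asm)
  qed
qed

lemma L2_AE_eq_0_if_orthogonal_test_funs: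
  assumes "L2 g"
    and "\<And>\<phi>. test_fun \<phi> \<Longrightarrow> integrable lborel (\<lambda>x. g x * \<phi> x) \<and> (\<integral>x. g x * \<phi> x \<partial>lborel) = 0"
  shows "AE x in lborel. g x = 0"
proof (rule AE_eq_0_if_interval_integrals_eq_0)
  show "integrable lborel (\<lambda>x. g x * indicator {a<..<b} x)" for a b
    by (rule L2_integrable_indicator[OF assms(1) _ emeasure_lborel_Ioo_finite]) simp
  show "(\<integral>x. g x * indicator {a<..<b} x \<partial>lborel) = 0" for a b
    using assms by (rule interval_integral_eq_0_if_orthogonal_test_funs)
qed

lemma L2_diff:
  assumes "L2 f" "L2 g"
  shows "L2 (\<lambda>x. f x - g x)"
proof -
  have [measurable]: "f \<in> borel_measurable lborel" "g \<in> borel_measurable lborel"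
    using assms by (auto simp: L2_def)
  have "integrable lborel (\<lambda>x. 2 * (f x)\<^sup>2 + 2 * (g x)\<^sup>2)"
    using assms by (auto simp: L2_def)
  then have "integrable lborel (\<lambda>x. (f x - g x)\<^sup>2)"
  proof (rule Bochner_Integration.integrable_bound)
    have "(f x - g x)\<^sup>2 \<le> 2 * (f x)\<^sup>2 + 2 * (g x)\<^sup>2" for x
      using zero_le_power2[of "f x + g x"] by (simp add: power2_eq_square algebra_simps)
    then show "AE x in lborel. norm ((f x - g x)\<^sup>2) \<le> norm (2 * (f x)\<^sup>2 + 2 * (g x)\<^sup>2)"
      by (intro AE_I2) simp
  qed measurable
  then show ?thesis by (simp add: L2_def)
qed

lemma weak_deriv_unique:
  assumes "L2 g1" "L2 g2" "is_weak_deriv u g1" "is_weak_deriv u g2"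
  shows "AE x in lborel. g1 x = g2 x"
proof -
  have "AE x in lborel. g1 x - g2 x = 0"
  proof (rule L2_AE_eq_0_if_orthogonal_test_funs[OF L2_diff[OF assms(1,2)]])
    fix \<phi> assume "test_fun \<phi>"
    then have "integrable lborel (\<lambda>x. g1 x * \<phi> x)" "integrable lborel (\<lambda>x. g2 x * \<phi> x)"
      and "- (\<integral>x. g1 x * \<phi> x \<partial>lborel) = - (\<integral>x. g2 x * \<phi> x \<partial>lborel)"
      using assms(3,4) unfolding is_weak_deriv_def by auto
    then show "integrable lborel (\<lambda>x. (g1 x - g2 x) * \<phi> x) \<and> (\<integral>x. (g1 x - g2 x) * \<phi> x \<partial>lborel) = 0"
      by (simp add: left_diff_distrib)
  qed
  then show ?thesis by simp
qed

section \<open>Scaling in \<open>H\<^sup>1\<close>\<close>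

lemma H1_wderiv: "u \<in> H1 \<Longrightarrow> L2 (wderiv u) \<and> is_weak_deriv u (wderiv u)"
  using someI_ex[of "\<lambda>g. L2 g \<and> is_weak_deriv u g"] by (simp add: H1_def wderiv_def)

lemma H1_borel_measurable:
  "u \<in> H1 \<Longrightarrow> u \<in> borel_measurable lborel"
  "u \<in> H1 \<Longrightarrow> wderiv u \<in> borel_measurable lborel"
  using H1_wderiv[of u] by (simp_all add: H1_def L2_def)

lemma L2_scale: "L2 u \<Longrightarrow> L2 (\<lambda>x. t * u x)"
  by (simp add: L2_def power_mult_distrib borel_measurable_times)

lemma is_weak_deriv_scale: "is_weak_deriv u g \<Longrightarrow> is_weak_deriv (\<lambda>x. t * u x) (\<lambda>x. t * g x)"
  by (simp add: is_weak_deriv_def mult.assoc)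

lemma H1_scale: "u \<in> H1 \<Longrightarrow> (\<lambda>x. t * u x) \<in> H1"
  using L2_scale is_weak_deriv_scale unfolding H1_def by blast

lemma wderiv_scale:
  assumes "u \<in> H1"
  shows "AE x in lborel. wderiv (\<lambda>x. t * u x) x = t * wderiv u x"
  using H1_wderiv[OF assms] H1_wderiv[OF H1_scale[OF assms]]
  by (intro weak_deriv_unique) (auto intro: L2_scale is_weak_deriv_scale)

lemma Sfun_scale:
  assumes "u \<in> H1" "v \<in> H1"
  shows "Sfun (\<lambda>x. t * u x) (\<lambda>x. t * v x) = t\<^sup>2 * Sfun u v"
proof -
  note [measurable] = H1_borel_measurable[OF assms(1)] H1_borel_measurable[OF assms(2)]
    H1_borel_measurable[OF H1_scale[OF assms(1)]] H1_borel_measurable[OF H1_scale[OF assms(2)]]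
  have "Sfun (\<lambda>x. t * u x) (\<lambda>x. t * v x) =
        (\<integral>x. t\<^sup>2 * ((wderiv u x)\<^sup>2 + (wderiv v x)\<^sup>2 + (u x)\<^sup>2 + (v x)\<^sup>2) \<partial>lborel)"
    unfolding Sfun_def
    using wderiv_scale[OF assms(1), of t] wderiv_scale[OF assms(2), of t]
    by (intro integral_cong_AE) (auto elim!: eventually_elim2 simp: power_mult_distrib algebra_simps)
  then show ?thesis by (simp add: Sfun_def)
qed

lemma Sfun_nonneg: "0 \<le> Sfun u v"
  unfolding Sfun_def by (rule integral_nonneg_AE) auto

lemma Sfun_pos:
  assumes "u \<in> H1" "v \<in> H1" "\<not> (AE x in lborel. u x = 0 \<and> v x = 0)"
  shows "0 < Sfun u v"
proof (rule ccontr)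
  assume "\<not> 0 < Sfun u v"
  then have "Sfun u v = 0" using Sfun_nonneg[of u v] by simp
  moreover have "integrable lborel (\<lambda>x. (wderiv u x)\<^sup>2 + (wderiv v x)\<^sup>2 + (u x)\<^sup>2 + (v x)\<^sup>2)"
    using H1_wderiv[OF assms(1)] H1_wderiv[OF assms(2)] assms(1,2) by (auto simp: L2_def H1_def)
  ultimately have "AE x in lborel. (wderiv u x)\<^sup>2 + (wderiv v x)\<^sup>2 + (u x)\<^sup>2 + (v x)\<^sup>2 = 0"
    unfolding Sfun_def by (subst (asm) integral_nonneg_eq_0_iff_AE) auto
  then have "AE x in lborel. u x = 0 \<and> v x = 0"
    by eventually_elim (auto simp: add_nonneg_eq_0_iff)
  then show False using assms(3) by simp
qed

section \<open>The Nehari manifold and the constraint set\<close>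

lemma Hfun_scale: "Hfun k a b c d (t * x) (t * y) = t ^ (2 * k + 2) * Hfun k a b c d x y"
  by (simp add: Hfun_def power_mult_distrib power_add power_mult power2_eq_square mult_2 algebra_simps)

lemma Ptilde_scale:
  "Ptilde k a b c d (\<lambda>x. t * u x) (\<lambda>x. t * v x) = t ^ (2 * k + 2) * Ptilde k a b c d u v"
  by (simp add: Ptilde_def Hfun_scale)

lemma Ifun_eq: "Ifun k a b c d u v = Sfun u v / 2 - Ptilde k a b c d u v / (2 * real k + 2)"
  by (simp add: Ifun_def Ptilde_def)

text \<open>Along the ray \<open>t \<mapsto> (1 + t)(u, v)\<close>, \<open>I = (1 + t)\<^sup>2 S/2 - (1 + t)\<^bsup>2k+2\<^esup> P/(2k + 2)\<close>.\<close>
lemma Nehari_iff: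
  "(u, v) \<in> Nehari k a b c d \<longleftrightarrow>
     u \<in> H1 \<and> v \<in> H1 \<and> \<not> (AE x in lborel. u x = 0 \<and> v x = 0) \<and> Sfun u v = Ptilde k a b c d u v"
proof -
  have "((\<lambda>t. Ifun k a b c d (\<lambda>x. u x + t * u x) (\<lambda>x. v x + t * v x)) has_real_derivative 0) (at 0)
        \<longleftrightarrow> Sfun u v = Ptilde k a b c d u v"
    if "u \<in> H1" "v \<in> H1"
  proof -
    let ?S = "Sfun u v" and ?P = "Ptilde k a b c d u v"
    have "Ifun k a b c d (\<lambda>x. u x + t * u x) (\<lambda>x. v x + t * v x) =
          (1 + t)\<^sup>2 * ?S / 2 - (1 + t) ^ (2 * k + 2) * ?P / (2 * real k + 2)" for t
      using Sfun_scale[OF that, of "1 + t"] Ptilde_scale[of k a b c d "1 + t" u v]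
      by (simp add: Ifun_eq distrib_right)
    moreover have "((\<lambda>t. (1 + t)\<^sup>2 * ?S / 2 - (1 + t) ^ (2 * k + 2) * ?P / (2 * real k + 2))
        has_real_derivative ?S - ?P) (at 0)"
      using add_nonneg_pos[of "2 * real k" 2]
      by (auto intro!: derivative_eq_intros simp: add.commute[of 2])
    ultimately show ?thesis
      using DERIV_unique by fastforce
  qed
  then show ?thesis unfolding Nehari_def by auto
qed

lemma Nehari_Ifun:
  assumes "0 < k" "(u, v) \<in> Nehari k a b c d"
  shows "(2 * real k + 2) / real k * Ifun k a b c d u v = Sfun u v"
proof -
  have "Ifun k a b c d u v = Sfun u v / 2 - Sfun u v / (2 * real k + 2)"
    using assms(2) by (simp add: Nehari_iff Ifun_eq)
  also have "\<dots> = real k / (2 * real k + 2) * Sfun u v"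
    by (simp add: field_simps add_nonneg_pos)
  finally show ?thesis using assms(1) by (simp add: add_nonneg_pos)
qed

lemma constraint_rescaled_into_Nehari:
  assumes "0 < k" "u \<in> H1" "v \<in> H1" "Ptilde k a b c d u v = 1"
  defines "t \<equiv> Sfun u v powr (1 / (2 * real k))"
  shows "((\<lambda>x. t * u x), (\<lambda>x. t * v x)) \<in> Nehari k a b c d"
    and "Sfun (\<lambda>x. t * u x) (\<lambda>x. t * v x) = Sfun u v powr ((real k + 1) / real k)"
proof -
  have nz: "\<not> (AE x in lborel. u x = 0 \<and> v x = 0)"
  proof
    assume "AE x in lborel. u x = 0 \<and> v x = 0"
    then have "AE x in lborel. Hfun k a b c d (u x) (v x) = 0"
      by eventually_elim (use assms(1) in \<open>simp add: Hfun_def\<close>)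
    then have "Ptilde k a b c d u v = 0"
      unfolding Ptilde_def by (simp add: integral_eq_zero_AE)
    with assms(4) show False by simp
  qed
  have S: "0 < Sfun u v" using Sfun_pos[OF assms(2,3) nz] .
  then have "0 < t" by (simp add: t_def)
  with nz have nonzero: "\<not> (AE x in lborel. t * u x = 0 \<and> t * v x = 0)" by simp
  have t_power: "t ^ n = Sfun u v powr (real n / (2 * real k))" for n
    using S by (simp add: t_def powr_power)
  have "Sfun (\<lambda>x. t * u x) (\<lambda>x. t * v x) = Sfun u v powr (1 / real k) * Sfun u v"
    unfolding Sfun_scale[OF assms(2,3)] t_power by simp
  also have "\<dots> = Sfun u v powr (1 / real k + 1)"
    using S by (simp add: powr_add)
  also have "1 / real k + 1 = (real k + 1) / real k"
    using assms(1) by (simp add: field_simps)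
  finally show S_t: "Sfun (\<lambda>x. t * u x) (\<lambda>x. t * v x) = Sfun u v powr ((real k + 1) / real k)" .
  have "Ptilde k a b c d (\<lambda>x. t * u x) (\<lambda>x. t * v x) = Sfun u v powr ((real k + 1) / real k)"
  proof -
    have "real (2 * k + 2) / (2 * real k) = (real k + 1) / real k"
      using assms(1) by (simp add: field_simps)
    then show ?thesis unfolding Ptilde_scale t_power assms(4) by simp
  qed
  with S_t nonzero assms(2,3) show "((\<lambda>x. t * u x), (\<lambda>x. t * v x)) \<in> Nehari k a b c d"
    by (simp add: Nehari_iff H1_scale)
qed

lemma Nehari_rescaled_into_constraint:
  assumes "0 < k" "(u, v) \<in> Nehari k a b c d"
  defines "s \<equiv> Sfun u v powr (- 1 / (2 * real k + 2))"
  shows "(\<lambda>x. s * u x) \<in> H1" "(\<lambda>x. s * v x) \<in> H1"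
    and "Ptilde k a b c d (\<lambda>x. s * u x) (\<lambda>x. s * v x) = 1"
    and "Sfun (\<lambda>x. s * u x) (\<lambda>x. s * v x) powr ((real k + 1) / real k) = Sfun u v"
proof -
  from assms(2) have H: "u \<in> H1" "v \<in> H1" and P: "Ptilde k a b c d u v = Sfun u v"
    and nz: "\<not> (AE x in lborel. u x = 0 \<and> v x = 0)"
    unfolding Nehari_iff by auto
  have S: "0 < Sfun u v" using Sfun_pos[OF H nz] .
  show "(\<lambda>x. s * u x) \<in> H1" "(\<lambda>x. s * v x) \<in> H1"
    using H by (auto intro: H1_scale)
  have s_power: "s ^ n = Sfun u v powr (- real n / (2 * real k + 2))" for n
    using S by (simp add: s_def powr_power)
  show "Ptilde k a b c d (\<lambda>x. s * u x) (\<lambda>x. s * v x) = 1"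
  proof -
    have "- real (2 * k + 2) / (2 * real k + 2) = - 1"
      using add_nonneg_pos[of "2 * real k" 2] by (simp add: field_simps)
    then show ?thesis unfolding Ptilde_scale P s_power using S by (simp add: powr_minus)
  qed
  have "Sfun (\<lambda>x. s * u x) (\<lambda>x. s * v x) = Sfun u v powr (- 2 / (2 * real k + 2)) * Sfun u v"
    unfolding Sfun_scale[OF H] s_power by simp
  also have "\<dots> = Sfun u v powr (- 2 / (2 * real k + 2) + 1)"
    by (subst powr_add) (use S in simp)
  also have "- 2 / (2 * real k + 2) + 1 = real k / (real k + 1)"
    by (simp add: field_simps add_nonneg_pos)
  finally show "Sfun (\<lambda>x. s * u x) (\<lambda>x. s * v x) powr ((real k + 1) / real k) = Sfun u v"
    using assms(1) S by (simp add: powr_powr)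
qed

lemma Sfun_powr_constraint_image_eq_Sfun_Nehari_image:
  assumes "0 < k"
  shows "(\<lambda>p. Sfun (fst p) (snd p) powr ((real k + 1) / real k)) `
           {(u, v). u \<in> H1 \<and> v \<in> H1 \<and> Ptilde k a b c d u v = 1}
         = (\<lambda>p. Sfun (fst p) (snd p)) ` Nehari k a b c d" (is "?lhs = ?rhs")
proof
  show "?lhs \<subseteq> ?rhs"
  proof (rule image_subsetI, clarify)
    fix u v assume uv: "u \<in> H1" "v \<in> H1" "Ptilde k a b c d u v = 1"
    show "Sfun (fst (u, v)) (snd (u, v)) powr ((real k + 1) / real k) \<in> ?rhs"
      by (rule rev_image_eqI[OF constraint_rescaled_into_Nehari(1)[OF assms uv]])
        (simp add: constraint_rescaled_into_Nehari(2)[OF assms uv])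
  qed
  show "?rhs \<subseteq> ?lhs"
  proof (rule image_subsetI, clarify)
    fix u v assume uv: "(u, v) \<in> Nehari k a b c d"
    note rescaled = Nehari_rescaled_into_constraint[OF assms uv]
    show "Sfun (fst (u, v)) (snd (u, v)) \<in> ?lhs"
      by (rule rev_image_eqI[of "(\<lambda>x. _ * u x, \<lambda>x. _ * v x)"]) (use rescaled in auto)
  qed
qed

section \<open>Infima in the extended reals\<close>

lemma ereal_mult_INF:
  "0 < c \<Longrightarrow> ereal c * (INF i\<in>I. f i) = (INF i\<in>I. ereal c * f i)"
  using ereal_Inf_cmult[of c "\<lambda>x. x \<in> f ` I"] by (simp add: setcompr_eq_image image_comp)

lemma ereal_powr_INF:
  fixes f :: "'a \<Rightarrow> real"
  assumes "\<And>i. i \<in> I \<Longrightarrow> 0 \<le> f i" "0 < q"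
  shows "ereal_powr (INF i\<in>I. ereal (f i)) q = (INF i\<in>I. ereal (f i powr q))"
proof (cases "I = {}")
  case True
  then show ?thesis by (simp add: ereal_powr_def top_ereal_def)
next
  case False
  have bdd: "bdd_below (f ` I)" "bdd_below ((\<lambda>i. f i powr q) ` I)"
    using assms(1) by (auto intro: bdd_belowI2[of _ 0])
  have "max 0 (Inf (f ` I)) powr q = (INF x\<in>f ` I. max 0 x powr q)"
  proof (rule continuous_at_Inf_mono)
    show "mono (\<lambda>x. max 0 x powr q)"
      using assms(2) by (auto intro!: monoI powr_mono2)
    have "continuous_on UNIV (\<lambda>x::real. max 0 x powr q)"
      using assms(2) by (intro continuous_on_powr' continuous_intros) auto
    then show "continuous (at_right (Inf (f ` I))) (\<lambda>x. max 0 x powr q)"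
      by (simp add: continuous_on_eq_continuous_at continuous_at_imp_continuous_at_within)
  qed (use False bdd in auto)
  moreover have "0 \<le> Inf (f ` I)"
    using False assms(1) by (auto intro: cINF_greatest)
  moreover have "(INF x\<in>f ` I. max 0 x powr q) = (INF i\<in>I. f i powr q)"
    unfolding image_comp o_def using assms(1) by (intro INF_cong refl) (simp add: max_absorb2)
  ultimately have "Inf (f ` I) powr q = (INF i\<in>I. f i powr q)"
    by simp
  then show ?thesis
    using ereal_Inf'[OF bdd(1), symmetric] ereal_Inf'[OF bdd(2), symmetric] False
    by (simp add: ereal_powr_def image_comp)
qed

theorem lemma5p1:
  fixes k :: nat and a b c d :: real
  assumes "k \<ge> 1" and "a \<ge> 0" and "b \<ge> 0" and "c \<ge> 0" and "d \<ge> 0"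
  shows "lambda1 k a b c d = ereal ((2 * real k + 2) / real k) * omegaN k a b c d"
proof -
  \<comment> \<open>Only the homogeneity of \<open>H\<close> enters.\<close>
  have k: "0 < k" using assms(1) by simp
  let ?A = "{(u, v). u \<in> H1 \<and> v \<in> H1 \<and> Ptilde k a b c d u v = 1}"
  let ?S = "\<lambda>p. Sfun (fst p) (snd p)" and ?q = "(real k + 1) / real k"
  have "lambda1 k a b c d = (INF p\<in>?A. ereal (?S p powr ?q))"
    unfolding lambda1_def S1_def using k Sfun_nonneg by (intro ereal_powr_INF) auto
  also have "\<dots> = (INF y\<in>(\<lambda>p. ?S p powr ?q) ` ?A. ereal y)"
    by (simp add: image_comp)
  also have "\<dots> = (INF p\<in>Nehari k a b c d. ereal (?S p))"
    by (simp add: Sfun_powr_constraint_image_eq_Sfun_Nehari_image[OF k] image_comp)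
  also have "\<dots> = (INF p\<in>Nehari k a b c d. ereal ((2 * real k + 2) / real k) * ereal (Ifun k a b c d (fst p) (snd p)))"
    using Nehari_Ifun[OF k] by (intro INF_cong) auto
  also have "\<dots> = ereal ((2 * real k + 2) / real k) * omegaN k a b c d"
    unfolding omegaN_def using k by (simp add: ereal_mult_INF)
  finally show ?thesis .
qed

end
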